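(* Let $G$ be a finite, simple, connected graph and let $v$ be a cut vertex of $G$. Then every resolving set for $G$ is disjoint from the vertex set of at most one connected component of $G\setminus\{v\}$. Moreover, if $W$ is a resolving set for $G$ that intersects the vertex sets of at least two distinct components of $G\setminus\{v\}$, then $W\setminus\{v\}$ is also a resolving set for $G$.
   Context: For vertices $x,y$ of a connected graph $G$, $d(x,y)$ denotes the length of a shortest $x$–$y$ path. A set $W\subseteq V(G)$ is a resolving set for $G$ if for every two distinct vertices $u,v\in V(G)$ there exists $w\in W$ with $d(u,w)\neq d(v,w)$. A vertex $v$ is a cut vertex of $G$ if the induced subgraph $G\setminus\{v\}$ on $V(G)\setminus\{v\}$ has at least two connected components. *)

theory Defs
  imports Main
begin

definition simple_graph :: "'a set \<Rightarrow> ('a \<Rightarrow> 'a \<Rightarrow> bool) \<Rightarrow> bool" where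
  "simple_graph V E \<longleftrightarrow> finite V \<and> (\<forall>x y. E x y \<longrightarrow> x \<in> V \<and> y \<in> V)
     \<and> (\<forall>x y. E x y \<longrightarrow> E y x) \<and> (\<forall>x. \<not> E x x)"

text \<open>A path in the subgraph induced on S: a nonempty list of distinct vertices of S,
  consecutive ones adjacent. Its length (number of edges) is length xs - 1.\<close>

definition path_in :: "'a set \<Rightarrow> ('a \<Rightarrow> 'a \<Rightarrow> bool) \<Rightarrow> 'a list \<Rightarrow> bool" where
  "path_in S E xs \<longleftrightarrow> xs \<noteq> [] \<and> set xs \<subseteq> S \<and> distinct xs
     \<and> (\<forall>i. Suc i < length xs \<longrightarrow> E (xs ! i) (xs ! Suc i))"

definition gdist :: "'a set \<Rightarrow> ('a \<Rightarrow> 'a \<Rightarrow> bool) \<Rightarrow> 'a \<Rightarrow> 'a \<Rightarrow> nat" where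
  "gdist V E x y = (LEAST n. \<exists>xs. path_in V E xs \<and> hd xs = x \<and> last xs = y \<and> length xs = Suc n)"

definition connected_graph :: "'a set \<Rightarrow> ('a \<Rightarrow> 'a \<Rightarrow> bool) \<Rightarrow> bool" where
  "connected_graph V E \<longleftrightarrow> V \<noteq> {} \<and>
     (\<forall>x\<in>V. \<forall>y\<in>V. \<exists>xs. path_in V E xs \<and> hd xs = x \<and> last xs = y)"

definition reach_in :: "'a set \<Rightarrow> ('a \<Rightarrow> 'a \<Rightarrow> bool) \<Rightarrow> 'a \<Rightarrow> 'a set" where
  "reach_in S E x = {y. \<exists>xs. path_in S E xs \<and> hd xs = x \<and> last xs = y}"

definition components_in :: "'a set \<Rightarrow> ('a \<Rightarrow> 'a \<Rightarrow> bool) \<Rightarrow> 'a set set" where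
  "components_in S E = reach_in S E ` S"

definition cut_vertex :: "'a set \<Rightarrow> ('a \<Rightarrow> 'a \<Rightarrow> bool) \<Rightarrow> 'a \<Rightarrow> bool" where
  "cut_vertex V E v \<longleftrightarrow> v \<in> V \<and>
     (\<exists>C1 \<in> components_in (V - {v}) E. \<exists>C2 \<in> components_in (V - {v}) E. C1 \<noteq> C2)"

definition resolving_set :: "'a set \<Rightarrow> ('a \<Rightarrow> 'a \<Rightarrow> bool) \<Rightarrow> 'a set \<Rightarrow> bool" where
  "resolving_set V E W \<longleftrightarrow> W \<subseteq> V \<and>
     (\<forall>u\<in>V. \<forall>w\<in>V. u \<noteq> w \<longrightarrow> (\<exists>z\<in>W. gdist V E u z \<noteq> gdist V E w z))"

end

theory Submission
  imports Defs
begin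

text \<open>Every path from a component C of G - v to a vertex outside C passes through v,
  so d(x,y) = d(x,v) + d(v,y) for x \<in> C and y \<notin> C. Hence the neighbours of v in two
  components avoided by W have the same distance d(v,z) + 1 to every z \<in> W. Conversely,
  for u, w outside a component C and a landmark w' \<in> C, d(u,w') - d(w,w') = d(u,v) - d(w,v),
  so w' separates whatever v separates; if instead u and w lie in the two components containing
  landmarks w1, w2, the exact equations on one side and the triangle inequality on the
  other show that w1 and w2 cannot both fail unless d(u,v) = d(w,v).\<close>

section \<open>Walks\<close>

inductive walk :: "'a set \<Rightarrow> ('a \<Rightarrow> 'a \<Rightarrow> bool) \<Rightarrow> 'a \<Rightarrow> 'a \<Rightarrow> nat \<Rightarrow> bool" for S E where
  walk_Nil: "x \<in> S \<Longrightarrow> walk S E x x 0"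
| walk_Cons: "E x y \<Longrightarrow> x \<in> S \<Longrightarrow> walk S E y z n \<Longrightarrow> walk S E x z (Suc n)"

lemma walk_in_set: "walk S E x y n \<Longrightarrow> x \<in> S \<and> y \<in> S"
  by (induction rule: walk.induct) auto

lemma walk_zero_eq: "walk S E x y 0 \<Longrightarrow> x = y"
  by (auto elim: walk.cases)

lemma walk_append: "walk S E x y m \<Longrightarrow> walk S E y z n \<Longrightarrow> walk S E x z (m + n)"
  by (induction rule: walk.induct) (auto intro: walk.intros)

lemma walk_edge: "E x y \<Longrightarrow> x \<in> S \<Longrightarrow> y \<in> S \<Longrightarrow> walk S E x y 1"
  using walk_Cons[OF _ _ walk_Nil] by (metis One_nat_def)

lemma walk_rev:
  assumes "\<And>x y. E x y \<Longrightarrow> E y x"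
  shows "walk S E x y n \<Longrightarrow> walk S E y x n"
proof (induction rule: walk.induct)
  case (walk_Nil x)
  then show ?case by (rule walk.walk_Nil)
next
  case (walk_Cons x y z n)
  then have "walk S E y x 1"
    using assms walk_edge walk_in_set by metis
  with walk_Cons.IH show ?case
    using walk_append by fastforce
qed

lemma path_in_Cons:
  "xs \<noteq> [] \<Longrightarrow> path_in S E (a # xs) \<longleftrightarrow> a \<in> S \<and> a \<notin> set xs \<and> E a (hd xs) \<and> path_in S E xs"
  unfolding path_in_def
proof (intro iffI; elim conjE; intro conjI)
  assume xs: "xs \<noteq> []" and adj: "\<forall>i. Suc i < length (a # xs) \<longrightarrow> E ((a # xs) ! i) ((a # xs) ! Suc i)"
  show "E a (hd xs)"
    using adj[rule_format, of 0] xs by (simp add: hd_conv_nth)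
  show "\<forall>i. Suc i < length xs \<longrightarrow> E (xs ! i) (xs ! Suc i)"
    using adj by (metis length_Cons nth_Cons_Suc Suc_less_eq)
next
  assume xs: "xs \<noteq> []" and adj: "\<forall>i. Suc i < length xs \<longrightarrow> E (xs ! i) (xs ! Suc i)"
    and "E a (hd xs)"
  then show "\<forall>i. Suc i < length (a # xs) \<longrightarrow> E ((a # xs) ! i) ((a # xs) ! Suc i)"
    by (auto simp: hd_conv_nth nth_Cons split: nat.split)
qed auto

lemma path_in_appendD: "path_in S E (as @ bs) \<Longrightarrow> bs \<noteq> [] \<Longrightarrow> path_in S E bs"
  unfolding path_in_def
proof (elim conjE, intro conjI allI impI)
  fix i
  assume "\<forall>i. Suc i < length (as @ bs) \<longrightarrow> E ((as @ bs) ! i) ((as @ bs) ! Suc i)"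
    and "Suc i < length bs"
  then show "E (bs ! i) (bs ! Suc i)"
    by (auto dest: spec[of _ "length as + i"] simp: nth_append)
qed auto

lemma path_in_imp_walk: "path_in S E xs \<Longrightarrow> walk S E (hd xs) (last xs) (length xs - 1)"
proof (induction xs)
  case Nil
  then show ?case by (simp add: path_in_def)
next
  case (Cons a xs)
  show ?case
  proof (cases "xs = []")
    case True
    then show ?thesis
      using Cons.prems by (auto simp: path_in_def intro: walk_Nil)
  next
    case False
    with Cons.prems have "a \<in> S" "E a (hd xs)" "path_in S E xs"
      using path_in_Cons by metis+
    with Cons.IH have "walk S E a (last xs) (Suc (length xs - 1))"
      by (auto intro: walk_Cons)
    with False show ?thesis
      by simp
  qed
qed

text \<open>Cutting off the part before the last visit of the start vertex makes a walk a path.\<close>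

lemma walk_imp_path_in:
  "walk S E x y n \<Longrightarrow> \<exists>xs. path_in S E xs \<and> hd xs = x \<and> last xs = y \<and> length xs \<le> Suc n"
proof (induction rule: walk.induct)
  case (walk_Nil x)
  then show ?case by (intro exI[of _ "[x]"]) (simp add: path_in_def)
next
  case (walk_Cons x y z n)
  then obtain ys where ys: "path_in S E ys" "hd ys = y" "last ys = z" "length ys \<le> Suc n"
    by blast
  then have "ys \<noteq> []"
    by (simp add: path_in_def)
  show ?case
  proof (cases "x \<in> set ys")
    case True
    then obtain as bs where ys_eq: "ys = as @ x # bs"
      by (meson split_list)
    then have "path_in S E (x # bs)"
      using path_in_appendD ys(1) by blast
    with ys ys_eq show ?thesis
      by (intro exI[of _ "x # bs"]) simp
  next
    case False
    with ys walk_Cons.hyps \<open>ys \<noteq> []\<close> have "path_in S E (x # ys)"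
      by (simp add: path_in_Cons)
    with ys \<open>ys \<noteq> []\<close> show ?thesis
      by (intro exI[of _ "x # ys"]) simp
  qed
qed

lemma reach_in_eq_walks: "reach_in S E a = {y. \<exists>n. walk S E a y n}"
  unfolding reach_in_def using walk_imp_path_in path_in_imp_walk by fastforce

section \<open>Distances in a connected simple graph\<close>

locale connected_simple_graph =
  fixes V :: "'a set" and E :: "'a \<Rightarrow> 'a \<Rightarrow> bool"
  assumes simple: "simple_graph V E" and connected: "connected_graph V E"
begin

lemma edge_sym: "E x y \<Longrightarrow> E y x"
  using simple by (simp add: simple_graph_def)

lemma edge_irrefl: "\<not> E x x"
  using simple by (simp add: simple_graph_def)

lemma edge_in_V: "E x y \<Longrightarrow> x \<in> V \<and> y \<in> V"
  using simple by (simp add: simple_graph_def)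

lemma walk_gdist: "x \<in> V \<Longrightarrow> y \<in> V \<Longrightarrow> walk V E x y (gdist V E x y)"
proof -
  assume "x \<in> V" "y \<in> V"
  then obtain xs where xs: "path_in V E xs" "hd xs = x" "last xs = y"
    using connected by (auto simp: connected_graph_def)
  then have "xs \<noteq> []"
    by (simp add: path_in_def)
  let ?P = "\<lambda>n. \<exists>xs. path_in V E xs \<and> hd xs = x \<and> last xs = y \<and> length xs = Suc n"
  from xs \<open>xs \<noteq> []\<close> have "?P (length xs - 1)"
    by (intro exI[of _ xs]) auto
  then have "?P (gdist V E x y)"
    unfolding gdist_def by (rule LeastI)
  then show ?thesis
    using path_in_imp_walk by fastforce
qed

lemma gdist_le_walk: "walk V E x y n \<Longrightarrow> gdist V E x y \<le> n"
proof -
  assume "walk V E x y n"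
  then obtain xs where xs: "path_in V E xs" "hd xs = x" "last xs = y" "length xs \<le> Suc n"
    using walk_imp_path_in by metis
  then obtain m where m: "length xs = Suc m"
    by (cases xs) (auto simp: path_in_def)
  have "gdist V E x y \<le> m"
    unfolding gdist_def by (rule Least_le) (use xs m in blast)
  with m xs show ?thesis
    by simp
qed

lemma gdist_sym: "x \<in> V \<Longrightarrow> y \<in> V \<Longrightarrow> gdist V E x y = gdist V E y x"
  using gdist_le_walk walk_gdist walk_rev edge_sym by (metis le_antisym)

lemma gdist_triangle:
  "x \<in> V \<Longrightarrow> y \<in> V \<Longrightarrow> z \<in> V \<Longrightarrow> gdist V E x z \<le> gdist V E x y + gdist V E y z"
  using gdist_le_walk walk_gdist walk_append by metis

lemma gdist_edge: "E x y \<Longrightarrow> gdist V E x y = 1"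
proof -
  assume e: "E x y"
  then have "gdist V E x y \<le> 1"
    using gdist_le_walk walk_edge edge_in_V by metis
  moreover have "gdist V E x y \<noteq> 0"
  proof
    assume "gdist V E x y = 0"
    then have "walk V E x y 0"
      using walk_gdist edge_in_V e by metis
    with e edge_irrefl show False
      using walk_zero_eq by metis
  qed
  ultimately show ?thesis
    by simp
qed

lemma reach_in_eq_of_mem: "y \<in> reach_in S E a \<Longrightarrow> reach_in S E y = reach_in S E a"
proof -
  assume "y \<in> reach_in S E a"
  then obtain m where m: "walk S E a y m"
    unfolding reach_in_eq_walks by blast
  then have "walk S E y a m"
    using walk_rev edge_sym by metis
  show ?thesis
  proof (intro set_eqI iffI)
    fix z
    assume "z \<in> reach_in S E y"
    then obtain k where "walk S E y z k"
      unfolding reach_in_eq_walks by blast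
    with m have "walk S E a z (m + k)"
      by (rule walk_append)
    then show "z \<in> reach_in S E a"
      unfolding reach_in_eq_walks by blast
  next
    fix z
    assume "z \<in> reach_in S E a"
    then obtain k where "walk S E a z k"
      unfolding reach_in_eq_walks by blast
    with \<open>walk S E y a m\<close> have "walk S E y z (m + k)"
      by (rule walk_append)
    then show "z \<in> reach_in S E y"
      unfolding reach_in_eq_walks by blast
  qed
qed

end

section \<open>Components after deleting a vertex\<close>

locale vertex_deleted_graph = connected_simple_graph +
  fixes v :: 'a
  assumes v_in_V: "v \<in> V"
begin

lemma component_subset: "C \<in> components_in (V - {v}) E \<Longrightarrow> C \<subseteq> V - {v}"
  unfolding components_in_def reach_in_eq_walks using walk_in_set by fast

lemma component_obtain:
  assumes "C \<in> components_in (V - {v}) E"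
  obtains a where "a \<in> C" "C = reach_in (V - {v}) E a"
proof -
  from assms obtain a where a: "a \<in> V - {v}" "C = reach_in (V - {v}) E a"
    unfolding components_in_def by auto
  then have "a \<in> C"
    unfolding reach_in_eq_walks by (auto intro: walk_Nil)
  with a that show ?thesis
    by blast
qed

lemma components_disjoint:
  "C1 \<in> components_in (V - {v}) E \<Longrightarrow> C2 \<in> components_in (V - {v}) E \<Longrightarrow> C1 \<noteq> C2
   \<Longrightarrow> C1 \<inter> C2 = {}"
  by (metis component_obtain disjoint_iff reach_in_eq_of_mem)

lemma walk_leaving_component:
  "walk V E x y n \<Longrightarrow> x \<in> reach_in (V - {v}) E a \<Longrightarrow> y \<notin> reach_in (V - {v}) E a
   \<Longrightarrow> \<exists>u \<in> reach_in (V - {v}) E a. \<exists>p q.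
         E u v \<and> walk V E x u p \<and> walk V E v y q \<and> Suc (p + q) = n"
proof (induction rule: walk.induct)
  case (walk_Nil x)
  then show ?case by simp
next
  case (walk_Cons x x' y n)
  have "x \<in> V" "x' \<in> V"
    using edge_in_V walk_Cons.hyps(1) by blast+
  show ?case
  proof (cases "x' = v")
    case True
    have "walk V E x x 0"
      using \<open>x \<in> V\<close> by (rule walk.walk_Nil)
    with True walk_Cons.hyps walk_Cons.prems(1) show ?thesis
      by (intro bexI[of _ x] exI[of _ 0] exI[of _ n]) auto
  next
    case False
    from walk_Cons.prems(1) obtain m where m: "walk (V - {v}) E a x m"
      unfolding reach_in_eq_walks by blast
    moreover have "walk (V - {v}) E x x' 1"
      using walk_in_set[OF m] False \<open>x' \<in> V\<close> walk_edge[of E x x' "V - {v}"] walk_Cons.hyps(1)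
      by simp
    ultimately have "walk (V - {v}) E a x' (m + 1)"
      by (rule walk_append)
    then have "x' \<in> reach_in (V - {v}) E a"
      unfolding reach_in_eq_walks by blast
    with walk_Cons.IH walk_Cons.prems(2) obtain u p q where
      u: "u \<in> reach_in (V - {v}) E a" "E u v" "walk V E x' u p" "walk V E v y q" "Suc (p + q) = n"
      by blast
    have "walk V E x x' 1"
      using walk_edge walk_Cons.hyps(1) \<open>x \<in> V\<close> \<open>x' \<in> V\<close> by metis
    then have "walk V E x u (1 + p)"
      using u(3) by (rule walk_append)
    with u show ?thesis
      by (intro bexI[of _ u] exI[of _ "1 + p"] exI[of _ q]) auto
  qed
qed

lemma component_has_neighbour:
  assumes "C \<in> components_in (V - {v}) E"
  obtains u where "u \<in> C" "E u v"
proof -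
  obtain a where a: "a \<in> C" "C = reach_in (V - {v}) E a"
    using component_obtain assms by metis
  moreover have "a \<in> V" "v \<notin> C"
    using component_subset assms a by blast+
  ultimately obtain u where "u \<in> C" "E u v"
    using walk_leaving_component[OF walk_gdist[OF \<open>a \<in> V\<close> v_in_V]] by blast
  with that show ?thesis .
qed

lemma gdist_from_component:
  assumes C: "C \<in> components_in (V - {v}) E" and "x \<in> C" "y \<in> V" "y \<notin> C"
  shows "gdist V E x y = gdist V E x v + gdist V E v y"
proof -
  obtain a where a: "C = reach_in (V - {v}) E a"
    using component_obtain C by metis
  have "x \<in> V"
    using component_subset C \<open>x \<in> C\<close> by blast
  from walk_leaving_component[OF walk_gdist[OF \<open>x \<in> V\<close> \<open>y \<in> V\<close>]] assms a
  obtain u p q where "E u v" "walk V E x u p" "walk V E v y q" "Suc (p + q) = gdist V E x y"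
    by blast
  have "walk V E u v 1"
    using walk_edge edge_in_V \<open>E u v\<close> by metis
  with \<open>walk V E x u p\<close> have "walk V E x v (p + 1)"
    by (rule walk_append)
  then have "gdist V E x v + gdist V E v y \<le> (p + 1) + q"
    using gdist_le_walk[OF \<open>walk V E x v (p + 1)\<close>] gdist_le_walk[OF \<open>walk V E v y q\<close>]
    by linarith
  then have "gdist V E x v + gdist V E v y \<le> gdist V E x y"
    using \<open>Suc (p + q) = gdist V E x y\<close> by linarith
  then show ?thesis
    using gdist_triangle[OF \<open>x \<in> V\<close> v_in_V \<open>y \<in> V\<close>] by linarith
qed

lemma gdist_into_component:
  assumes "C \<in> components_in (V - {v}) E" and "y \<in> C" "x \<in> V" "x \<notin> C"
  shows "gdist V E x y = gdist V E x v + gdist V E v y"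
proof -
  have "y \<in> V"
    using component_subset assms by blast
  then show ?thesis
    using gdist_from_component[OF assms(1,2,3,4)] gdist_sym assms(3) v_in_V by simp
qed

section \<open>Resolving sets and the cut vertex\<close>

lemma resolving_set_meets_all_but_one_component:
  assumes W: "resolving_set V E W"
    and C1: "C1 \<in> components_in (V - {v}) E" and C2: "C2 \<in> components_in (V - {v}) E"
    and "C1 \<inter> W = {}" "C2 \<inter> W = {}"
  shows "C1 = C2"
proof (rule ccontr)
  assume "C1 \<noteq> C2"
  obtain u1 u2 where u: "u1 \<in> C1" "E u1 v" "u2 \<in> C2" "E u2 v"
    using component_has_neighbour C1 C2 by metis
  then have "u1 \<noteq> u2" "u1 \<in> V" "u2 \<in> V"
    using components_disjoint[OF C1 C2 \<open>C1 \<noteq> C2\<close>] edge_in_V by blast+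
  then obtain z where z: "z \<in> W" "gdist V E u1 z \<noteq> gdist V E u2 z"
    using W unfolding resolving_set_def by blast
  then have "z \<in> V" "z \<notin> C1" "z \<notin> C2"
    using W assms(4,5) unfolding resolving_set_def by blast+
  then have "gdist V E u1 z = 1 + gdist V E v z" "gdist V E u2 z = 1 + gdist V E v z"
    using u gdist_from_component[OF C1 u(1)] gdist_from_component[OF C2 u(3)] gdist_edge
    by simp_all
  with z show False
    by simp
qed

lemma landmarks_in_two_components_resolve_cut_vertex:
  assumes C1: "C1 \<in> components_in (V - {v}) E" and C2: "C2 \<in> components_in (V - {v}) E"
    and "C1 \<noteq> C2" and w1: "w1 \<in> C1" and w2: "w2 \<in> C2"
    and "u \<in> V" "w \<in> V" and ne: "gdist V E u v \<noteq> gdist V E w v"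
  shows "gdist V E u w1 \<noteq> gdist V E w w1 \<or> gdist V E u w2 \<noteq> gdist V E w w2"
proof -
  have "w1 \<in> V" "w2 \<in> V"
    using component_subset C1 C2 w1 w2 by blast+
  have through_w1: "gdist V E x w1 = gdist V E x v + gdist V E v w1" if "x \<in> V" "x \<notin> C1" for x
    using gdist_into_component[OF C1 w1 that] .
  have through_w2: "gdist V E x w2 = gdist V E x v + gdist V E v w2" if "x \<in> V" "x \<notin> C2" for x
    using gdist_into_component[OF C2 w2 that] .
  have triangle: "gdist V E x w1 \<le> gdist V E x v + gdist V E v w1"
    "gdist V E x w2 \<le> gdist V E x v + gdist V E v w2" if "x \<in> V" for x
    using gdist_triangle that v_in_V \<open>w1 \<in> V\<close> \<open>w2 \<in> V\<close> by blast+
  consider "u \<notin> C1" "w \<notin> C1" | "u \<notin> C2" "w \<notin> C2" | "u \<in> C1" "w \<in> C2" | "w \<in> C1" "u \<in> C2"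
    using components_disjoint[OF C1 C2 \<open>C1 \<noteq> C2\<close>] by blast
  then show ?thesis
  proof cases
    case 1
    then show ?thesis using through_w1 \<open>u \<in> V\<close> \<open>w \<in> V\<close> ne by simp
  next
    case 2
    then show ?thesis using through_w2 \<open>u \<in> V\<close> \<open>w \<in> V\<close> ne by simp
  next
    case 3
    then have "u \<notin> C2" "w \<notin> C1"
      using components_disjoint[OF C1 C2 \<open>C1 \<noteq> C2\<close>] by blast+
    then show ?thesis
      using through_w1[of w] through_w2[of u] triangle[of u] triangle[of w] \<open>u \<in> V\<close> \<open>w \<in> V\<close> ne
      by linarith
  next
    case 4
    then have "w \<notin> C2" "u \<notin> C1"
      using components_disjoint[OF C1 C2 \<open>C1 \<noteq> C2\<close>] by blast+
    then show ?thesis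
      using through_w1[of u] through_w2[of w] triangle[of u] triangle[of w] \<open>u \<in> V\<close> \<open>w \<in> V\<close> ne
      by linarith
  qed
qed

lemma resolving_set_Diff_cut_vertex:
  assumes W: "resolving_set V E W"
    and C1: "C1 \<in> components_in (V - {v}) E" and C2: "C2 \<in> components_in (V - {v}) E"
    and "C1 \<noteq> C2" and w1: "w1 \<in> C1 \<inter> W" and w2: "w2 \<in> C2 \<inter> W"
  shows "resolving_set V E (W - {v})"
  unfolding resolving_set_def
proof (intro conjI ballI impI)
  show "W - {v} \<subseteq> V"
    using W unfolding resolving_set_def by blast
  have "w1 \<in> W - {v}" "w2 \<in> W - {v}"
    using w1 w2 component_subset C1 C2 by blast+
  fix u w
  assume "u \<in> V" "w \<in> V" "u \<noteq> w"
  then obtain z where z: "z \<in> W" "gdist V E u z \<noteq> gdist V E w z"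
    using W unfolding resolving_set_def by blast
  show "\<exists>z\<in>W - {v}. gdist V E u z \<noteq> gdist V E w z"
  proof (cases "z = v")
    case True
    then show ?thesis
      using landmarks_in_two_components_resolve_cut_vertex[OF C1 C2 \<open>C1 \<noteq> C2\<close>, of w1 w2 u w]
        z \<open>u \<in> V\<close> \<open>w \<in> V\<close> w1 w2 \<open>w1 \<in> W - {v}\<close> \<open>w2 \<in> W - {v}\<close> by blast
  next
    case False
    with z show ?thesis
      by blast
  qed
qed

end

theorem proposition2p2:
  fixes V :: "'a set" and E :: "'a \<Rightarrow> 'a \<Rightarrow> bool" and v :: 'a
  assumes "simple_graph V E" and "connected_graph V E" and "cut_vertex V E v"
  shows "(\<forall>W. resolving_set V E W \<longrightarrow>
            (\<forall>C1 \<in> components_in (V - {v}) E. \<forall>C2 \<in> components_in (V - {v}) E.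
               C1 \<inter> W = {} \<and> C2 \<inter> W = {} \<longrightarrow> C1 = C2))
       \<and> (\<forall>W. resolving_set V E W \<and>
            (\<exists>C1 \<in> components_in (V - {v}) E. \<exists>C2 \<in> components_in (V - {v}) E.
               C1 \<noteq> C2 \<and> C1 \<inter> W \<noteq> {} \<and> C2 \<inter> W \<noteq> {})
            \<longrightarrow> resolving_set V E (W - {v}))"
proof -
  from assms interpret vertex_deleted_graph V E v
    by unfold_locales (simp_all add: cut_vertex_def)
  show ?thesis
    using resolving_set_meets_all_but_one_component resolving_set_Diff_cut_vertex by blast
qed

end
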